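(* Let $\alpha>1$, $r=\frac12(1-\frac1\alpha)$, let $a,b$ be positive integers with $s=a+b\ge2$, and let $n'_*=\lfloor -\log_r (s-1)\rfloor+1$. Then for every positive even integer $k$ with \[ k\ \ge\ \max\Bigg\{\left\lceil 2\,\frac{(1-r+r^{n'_*})^{s-2}\,[\,(1-r+r^{n'_*})+(s-1)\,]}{(1-r)^{s-2}\,[\,(1-r)+(s-1)(1-r^{n'_*})\,]}+2\right\rceil\Big(\frac{1-r}{r}\Big)^{s-1},\ \ 2\Big(\frac{1-r}{r}\Big)^{s},\ \ 2\Big(\frac1{1-r}\Big)^{s-1}+2\Bigg\}, \] we have \[ \Big[0,\tfrac k2\Big]=\{x_1^ax_2^b+x_3^ax_4^b+\cdots+x_{k-1}^ax_k^b:\ x_1,\dots,x_k\in C_\alpha\}. \]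
   Context: For real $\alpha>1$ let $r=\frac12(1-\frac1\alpha)\in(0,\frac12)$. Define $f_0,f_1:[0,1]\to[0,1]$ by $f_0(x)=rx$, $f_1(x)=rx+1-r$; for $\omega=\sigma_1\cdots\sigma_n\in\{0,1\}^n$ let $f_\omega=f_{\sigma_1}\circ\cdots\circ f_{\sigma_n}$. Let $F_n=\{f_\omega([0,1]):\omega\in\{0,1\}^n\}$ (the level-$n$ basic intervals, each of length $r^n$), $C_n=\bigcup_{I\in F_n}I$, and $C_\alpha=\bigcap_{n\ge1}C_n$ (the middle-$\frac1\alpha$ Cantor set; $C_3$ is the ternary Cantor set). *)

theory Defs
  imports Complex_Main
begin

definition cantor_ratio :: "real \<Rightarrow> real" where
  "cantor_ratio \<alpha> = (1 - 1 / \<alpha>) / 2"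

definition cantor_map :: "real \<Rightarrow> bool \<Rightarrow> real \<Rightarrow> real" where
  "cantor_map r \<sigma> x = (if \<sigma> then r * x + 1 - r else r * x)"

fun cantor_word :: "real \<Rightarrow> bool list \<Rightarrow> real \<Rightarrow> real" where
  "cantor_word r [] x = x"
| "cantor_word r (\<sigma> # \<omega>) x = cantor_map r \<sigma> (cantor_word r \<omega> x)"

definition basic_intervals :: "real \<Rightarrow> nat \<Rightarrow> real set set" where
  "basic_intervals r n = {cantor_word r \<omega> ` {0..1} | \<omega>. length \<omega> = n}"

definition cantor_level :: "real \<Rightarrow> nat \<Rightarrow> real set" where
  "cantor_level r n = \<Union> (basic_intervals r n)"

definition cantor_set :: "real \<Rightarrow> real set" where
  "cantor_set \<alpha> = (\<Inter>n\<in>{1..}. cantor_level (cantor_ratio \<alpha>) n)"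

end

theory Submission
  imports Defs "HOL-Analysis.Analysis" "HOL-Library.Sublist"
begin

text \<open>Taking the two points of each pair equal turns \<open>x ^ a * y ^ b\<close> into \<open>x ^ s\<close> with
  \<open>s = a + b\<close>, so it suffices to write every \<open>y \<in> [0, m]\<close>, \<open>m = k / 2\<close>, as a sum of \<open>m\<close>
  \<open>s\<close>-th powers of points of \<open>C\<^sub>\<alpha>\<close>. Under \<open>x \<mapsto> x ^ s\<close> every gap of a level-\<open>N\<close> approximation
  is still at most \<open>1 / \<tau>\<close> times each neighbouring bridge, where \<open>\<tau> = \<rho>\<^sup>s / (1 - \<rho>\<^sup>s)\<close> and
  \<open>\<rho> = r / (1 - r)\<close>. For such a finite family of gaps one keeps an interval \<open>[a\<^sub>j, b\<^sub>j]\<close>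
  for each summand with \<open>\<Sum> h a\<^sub>j \<le> y \<le> \<Sum> h b\<^sub>j\<close>, and repeatedly cuts the largest gap
  still inside one of them out of its interval, keeping the side from which \<open>y\<close> stays
  reachable; \<open>(m - 1) min 1 \<tau> \<ge> 1\<close>, which follows from \<open>m \<ge> ((1 - r) / r)\<^sup>s\<close>, guarantees
  that one side always works. When no gap is left, the intermediate value theorem gives the
  points. Compactness of the levels then passes from level \<open>N\<close> to \<open>C\<^sub>\<alpha>\<close>.\<close>

section \<open>Sums of points avoiding a thick family of gaps\<close>

lemma sum_fun_upd_remove:
  assumes "finite A" "i \<in> A"
  shows "(\<Sum>j\<in>A. g ((f(i := v)) j)) = g v + (\<Sum>j\<in>A - {i}. g (f j))"
  using assms by (simp add: sum.remove[of A i])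

text \<open>\<open>F\<close> is the finite family of open gaps \<open>(c, d)\<close> of a compact subset of \<open>[0, 1]\<close>
  containing \<open>0\<close> and \<open>1\<close>; measured through \<open>h\<close>, both bridges next to a gap are at least
  \<open>\<tau>\<close> times the gap, a bridge ending at the next gap only counted if that gap is not smaller.\<close>
locale thick_gap_system =
  fixes h :: "real \<Rightarrow> real" and F :: "(real \<times> real) set" and m :: nat and \<tau> :: real
  assumes gaps_finite: "finite F"
    and gaps_in_unit: "(c, d) \<in> F \<Longrightarrow> 0 < c \<and> c < d \<and> d < 1"
    and gap_ends_differ: "(c, d) \<in> F \<Longrightarrow> (c', d') \<in> F \<Longrightarrow> c' \<noteq> d"
    and gap_ends_not_inside:
      "(c, d) \<in> F \<Longrightarrow> (c', d') \<in> F \<Longrightarrow> \<not> (c < c' \<and> c' < d) \<and> \<not> (c < d' \<and> d' < d)"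
    and h_cont: "continuous_on {0..1} h"
    and h_mono: "0 \<le> x \<Longrightarrow> x \<le> y \<Longrightarrow> y \<le> 1 \<Longrightarrow> h x \<le> h y"
    and h_0: "h 0 = 0" and h_1: "h 1 = 1"
    and thick_right: "(c, d) \<in> F \<Longrightarrow> d < b \<Longrightarrow> b \<le> 1 \<Longrightarrow>
      b = 1 \<or> (\<exists>d'. (b, d') \<in> F \<and> h d - h c \<le> h d' - h b) \<Longrightarrow> \<tau> * (h d - h c) \<le> h b - h d"
    and thick_left: "(c, d) \<in> F \<Longrightarrow> 0 \<le> a \<Longrightarrow> a < c \<Longrightarrow>
      a = 0 \<or> (\<exists>c'. (c', a) \<in> F \<and> h d - h c \<le> h a - h c') \<Longrightarrow> \<tau> * (h d - h c) \<le> h c - h a"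
    and many_summands: "1 \<le> real (m - 1) * min 1 \<tau>"
begin

lemma thickness_pos: "0 < \<tau>"
proof (rule ccontr)
  assume "\<not> 0 < \<tau>"
  then have "real (m - 1) * min 1 \<tau> \<le> 0"
    by (intro mult_nonneg_nonpos) auto
  then show False
    using many_summands by linarith
qed

lemma gap_h_size_le_1: "(c, d) \<in> F \<Longrightarrow> h d - h c \<le> 1"
  using gaps_in_unit[of c d] h_mono[of d 1] h_mono[of 0 c] h_0 h_1 by force

lemma gap_h_size_nonneg: "(c, d) \<in> F \<Longrightarrow> 0 \<le> h d - h c"
  using gaps_in_unit[of c d] h_mono[of c d] by force

definition gaps_within :: "(nat \<Rightarrow> real) \<Rightarrow> (nat \<Rightarrow> real) \<Rightarrow> (nat \<times> real \<times> real) set" where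
  "gaps_within a b = {(j, c, d). j < m \<and> (c, d) \<in> F \<and> a j \<le> c \<and> d \<le> b j}"

lemma finite_gaps_within: "finite (gaps_within a b)"
  by (rule finite_subset[of _ "{..<m} \<times> F"]) (auto simp: gaps_within_def gaps_finite)

text \<open>The state of the construction: the \<open>j\<close>-th point is still free in \<open>[a j, b j]\<close>,
  every gap left inside these intervals has \<open>h\<close>-size at most \<open>M\<close>, their ends are \<open>0\<close>, \<open>1\<close> or
  ends of gaps of size at least \<open>M\<close>, and each interval has \<open>h\<close>-size at least \<open>\<tau> M\<close>.\<close>
definition admissible :: "(nat \<Rightarrow> real) \<Rightarrow> (nat \<Rightarrow> real) \<Rightarrow> real \<Rightarrow> real \<Rightarrow> bool" where
  "admissible a b M y \<longleftrightarrow>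
    (\<forall>j<m. 0 \<le> a j \<and> a j \<le> b j \<and> b j \<le> 1 \<and>
      (a j = 0 \<or> (\<exists>c. (c, a j) \<in> F \<and> M \<le> h (a j) - h c)) \<and>
      (b j = 1 \<or> (\<exists>d. (b j, d) \<in> F \<and> M \<le> h d - h (b j))) \<and>
      (a j = 0 \<and> b j = 1 \<or> \<tau> * M \<le> h (b j) - h (a j))) \<and>
    (\<forall>j c d. (j, c, d) \<in> gaps_within a b \<longrightarrow> h d - h c \<le> M) \<and>
    (\<Sum>j<m. h (a j)) \<le> y \<and> y \<le> (\<Sum>j<m. h (b j))"

lemma admissibleD:
  assumes "admissible a b M y" "j < m"
  shows "0 \<le> a j" "a j \<le> b j" "b j \<le> 1"
    and "a j = 0 \<or> (\<exists>c. (c, a j) \<in> F \<and> M \<le> h (a j) - h c)"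
    and "b j = 1 \<or> (\<exists>d. (b j, d) \<in> F \<and> M \<le> h d - h (b j))"
    and "a j = 0 \<and> b j = 1 \<or> \<tau> * M \<le> h (b j) - h (a j)"
  using assms unfolding admissible_def by blast+

lemma admissible_gap_le: "admissible a b M y \<Longrightarrow> (j, c, d) \<in> gaps_within a b \<Longrightarrow> h d - h c \<le> M"
  unfolding admissible_def by blast

lemma admissible_sums: "admissible a b M y \<Longrightarrow> (\<Sum>j<m. h (a j)) \<le> y \<and> y \<le> (\<Sum>j<m. h (b j))"
  unfolding admissible_def by blast

lemma admissibleI:
  assumes "\<And>j. j < m \<Longrightarrow> 0 \<le> a j \<and> a j \<le> b j \<and> b j \<le> 1"
    and "\<And>j. j < m \<Longrightarrow> a j = 0 \<or> (\<exists>c. (c, a j) \<in> F \<and> M \<le> h (a j) - h c)"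
    and "\<And>j. j < m \<Longrightarrow> b j = 1 \<or> (\<exists>d. (b j, d) \<in> F \<and> M \<le> h d - h (b j))"
    and "\<And>j. j < m \<Longrightarrow> a j = 0 \<and> b j = 1 \<or> \<tau> * M \<le> h (b j) - h (a j)"
    and "\<And>j c d. (j, c, d) \<in> gaps_within a b \<Longrightarrow> h d - h c \<le> M"
    and "(\<Sum>j<m. h (a j)) \<le> y" "y \<le> (\<Sum>j<m. h (b j))"
  shows "admissible a b M y"
  using assms unfolding admissible_def by blast

lemma admissible_initial: "y \<in> {0..real m} \<Longrightarrow> admissible (\<lambda>_. 0) (\<lambda>_. 1) 1 y"
  by (rule admissibleI) (auto simp: h_0 h_1 gaps_within_def gap_h_size_le_1)

definition avoids_gaps :: "real \<Rightarrow> bool" where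
  "avoids_gaps x \<longleftrightarrow> x \<in> {0..1} \<and> (\<forall>(c, d) \<in> F. \<not> (c < x \<and> x < d))"

lemma admissible_no_gaps_within_avoids:
  assumes adm: "admissible a b M y" and empty: "gaps_within a b = {}"
    and j: "j < m" and x: "a j \<le> x" "x \<le> b j"
  shows "avoids_gaps x"
  unfolding avoids_gaps_def
proof (intro conjI ballI)
  show "x \<in> {0..1}"
    using admissibleD[OF adm j] x by auto
  fix g
  assume "g \<in> F"
  then obtain c d where g: "g = (c, d)" "(c, d) \<in> F"
    by (cases g) auto
  have "(j, c, d) \<notin> gaps_within a b"
    using empty by simp
  then have "c < a j \<or> b j < d"
    using g(2) j unfolding gaps_within_def by auto
  moreover have False if "c < a j" "a j < d"
    using admissibleD(4)[OF adm j] gaps_in_unit[OF g(2)] gap_ends_not_inside[OF g(2)] that by force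
  moreover have False if "c < b j" "b j < d"
    using admissibleD(5)[OF adm j] gaps_in_unit[OF g(2)] gap_ends_not_inside[OF g(2)] that by force
  ultimately show "case g of (c, d) \<Rightarrow> \<not> (c < x \<and> x < d)"
    using g(1) x by fastforce
qed

lemma admissible_no_gaps_within_solution:
  assumes adm: "admissible a b M y" and empty: "gaps_within a b = {}"
  shows "\<exists>x. (\<forall>j<m. avoids_gaps (x j)) \<and> (\<Sum>j<m. h (x j)) = y"
proof -
  define x where "x t j = a j + t * (b j - a j)" for t j
  have x_between: "a j \<le> x t j \<and> x t j \<le> b j" if "t \<in> {0..1}" "j < m" for t j
    using that admissibleD(2)[OF adm \<open>j < m\<close>] mult_left_le_one_le[of "b j - a j" t]
    by (auto simp: x_def)
  have x_unit: "x t j \<in> {0..1}" if "t \<in> {0..1}" "j < m" for t j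
    using x_between[OF that] admissibleD(1,3)[OF adm \<open>j < m\<close>] by auto
  have "continuous_on {0..1} (\<lambda>t. \<Sum>j<m. h (x t j))"
    unfolding x_def using x_unit[unfolded x_def]
    by (intro continuous_on_sum continuous_on_compose2[OF h_cont] continuous_intros) auto
  moreover have "(\<Sum>j<m. h (x 0 j)) \<le> y" "y \<le> (\<Sum>j<m. h (x 1 j))"
    using admissible_sums[OF adm] by (simp_all add: x_def)
  ultimately obtain t where t: "t \<in> {0..1}" "(\<Sum>j<m. h (x t j)) = y"
    using IVT'[of "\<lambda>t. \<Sum>j<m. h (x t j)" 0 y 1] by auto
  then show ?thesis
    using admissible_no_gaps_within_avoids[OF adm empty] x_between by blast
qed

lemma admissible_gap_ends_strict:
  assumes adm: "admissible a b M y" and gap: "(i, c, d) \<in> gaps_within a b"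
  shows "a i < c" "d < b i"
proof -
  have i: "i < m" "(c, d) \<in> F" "a i \<le> c" "d \<le> b i"
    using gap by (auto simp: gaps_within_def)
  have "a i \<noteq> c"
    using admissibleD(4)[OF adm i(1)] gaps_in_unit[OF i(2)] gap_ends_differ[OF _ i(2)] by force
  moreover have "b i \<noteq> d"
    using admissibleD(5)[OF adm i(1)] gaps_in_unit[OF i(2)] gap_ends_differ[OF i(2)] by force
  ultimately show "a i < c" "d < b i"
    using i by auto
qed

text \<open>Removing the largest remaining gap \<open>(c, d)\<close> from the \<open>i\<close>-th interval: keep its part left of
  the gap if the target is still reachable, otherwise its part right of the gap.\<close>
context
  fixes a b M y i c d
  assumes adm: "admissible a b M y"
    and gap: "(i, c, d) \<in> gaps_within a b"
    and largest: "\<And>j c' d'. (j, c', d') \<in> gaps_within a b \<Longrightarrow> h d' - h c' \<le> h d - h c"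
begin

lemma largest_gap_facts:
  shows "i < m" "(c, d) \<in> F" "a i < c" "d < b i" "h d - h c \<le> M" "c < d"
  using gap admissible_gap_ends_strict[OF adm gap] admissible_gap_le[OF adm gap] gaps_in_unit
  by (auto simp: gaps_within_def)

lemma cut_right_admissible:
  assumes "y \<le> (\<Sum>j<m. h ((b(i := c)) j))"
  shows "admissible a (b(i := c)) (h d - h c) y"
proof (rule admissibleI)
  fix j
  assume j: "j < m"
  note old = admissibleD[OF adm j] and facts = largest_gap_facts
  show "0 \<le> a j \<and> a j \<le> (b(i := c)) j \<and> (b(i := c)) j \<le> 1"
    using old facts gaps_in_unit[OF facts(2)] by auto
  show "a j = 0 \<or> (\<exists>c'. (c', a j) \<in> F \<and> h d - h c \<le> h (a j) - h c')"
    using old(4) facts(5) by force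
  show "(b(i := c)) j = 1 \<or> (\<exists>d'. ((b(i := c)) j, d') \<in> F \<and> h d - h c \<le> h d' - h ((b(i := c)) j))"
    using old(5) facts by (cases "j = i") force+
  have "\<tau> * (h d - h c) \<le> \<tau> * M"
    using facts(5) thickness_pos by simp
  moreover have "\<tau> * (h d - h c) \<le> h c - h (a i)"
    using admissibleD(4)[OF adm facts(1)] admissibleD(1)[OF adm facts(1)] facts
    by (intro thick_left) force+
  ultimately show "a j = 0 \<and> (b(i := c)) j = 1 \<or> \<tau> * (h d - h c) \<le> h ((b(i := c)) j) - h (a j)"
    using old(6) by (cases "j = i") auto
next
  fix j c' d'
  assume "(j, c', d') \<in> gaps_within a (b(i := c))"
  then have "(j, c', d') \<in> gaps_within a b"
    using largest_gap_facts gaps_in_unit[of c' d'] by (force simp: gaps_within_def split: if_splits)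
  then show "h d' - h c' \<le> h d - h c"
    by (rule largest)
qed (use admissible_sums[OF adm] assms in auto)

lemma cut_left_admissible:
  assumes "(\<Sum>j<m. h ((a(i := d)) j)) \<le> y"
  shows "admissible (a(i := d)) b (h d - h c) y"
proof (rule admissibleI)
  fix j
  assume j: "j < m"
  note old = admissibleD[OF adm j] and facts = largest_gap_facts
  show "0 \<le> (a(i := d)) j \<and> (a(i := d)) j \<le> b j \<and> b j \<le> 1"
    using old facts gaps_in_unit[OF facts(2)] by auto
  show "(a(i := d)) j = 0 \<or> (\<exists>c'. (c', (a(i := d)) j) \<in> F \<and> h d - h c \<le> h ((a(i := d)) j) - h c')"
    using old(4) facts by (cases "j = i") force+
  show "b j = 1 \<or> (\<exists>d'. (b j, d') \<in> F \<and> h d - h c \<le> h d' - h (b j))"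
    using old(5) facts(5) by force
  have "\<tau> * (h d - h c) \<le> \<tau> * M"
    using facts(5) thickness_pos by simp
  moreover have "\<tau> * (h d - h c) \<le> h (b i) - h d"
    using admissibleD(5)[OF adm facts(1)] admissibleD(3)[OF adm facts(1)] facts
    by (intro thick_right) force+
  ultimately show "(a(i := d)) j = 0 \<and> b j = 1 \<or> \<tau> * (h d - h c) \<le> h (b j) - h ((a(i := d)) j)"
    using old(6) by (cases "j = i") auto
next
  fix j c' d'
  assume "(j, c', d') \<in> gaps_within (a(i := d)) b"
  then have "(j, c', d') \<in> gaps_within a b"
    using largest_gap_facts gaps_in_unit[of c' d'] by (force simp: gaps_within_def split: if_splits)
  then show "h d' - h c' \<le> h d - h c"
    by (rule largest)
qed (use admissible_sums[OF adm] assms in auto)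

text \<open>Here the number of summands enters: the other \<open>m - 1\<close> intervals have total \<open>h\<close>-size at
  least \<open>(m - 1) min 1 \<tau>\<close> times the gap, so removing the gap cannot skip over \<open>y\<close>.\<close>
lemma cut_sums_le: "(\<Sum>j<m. h ((a(i := d)) j)) \<le> (\<Sum>j<m. h ((b(i := c)) j))"
proof -
  note facts = largest_gap_facts
  let ?G = "h d - h c" and ?rest = "{..<m} - {i}"
  have "0 \<le> ?G" "?G \<le> 1"
    using gap_h_size_nonneg gap_h_size_le_1 facts(2) by auto
  have "min 1 \<tau> * ?G \<le> h (b j) - h (a j)" if "j < m" for j
  proof -
    have "min 1 \<tau> * ?G \<le> \<tau> * ?G" "\<tau> * ?G \<le> \<tau> * M"
      using \<open>0 \<le> ?G\<close> facts(5) thickness_pos by (auto intro: mult_right_mono)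
    moreover have "min 1 \<tau> * ?G \<le> 1"
      using \<open>0 \<le> ?G\<close> \<open>?G \<le> 1\<close> by (intro mult_le_one) auto
    ultimately show ?thesis
      using admissibleD(6)[OF adm that] h_0 h_1 by auto
  qed
  then have "real (card ?rest) * (min 1 \<tau> * ?G) \<le> (\<Sum>j\<in>?rest. h (b j) - h (a j))"
    by (intro sum_bounded_below) auto
  moreover have "?G \<le> real (m - 1) * (min 1 \<tau> * ?G)"
    using mult_right_mono[OF many_summands \<open>0 \<le> ?G\<close>] by (simp add: mult.assoc)
  ultimately have "?G \<le> (\<Sum>j\<in>?rest. h (b j)) - (\<Sum>j\<in>?rest. h (a j))"
    using facts(1) by (simp add: sum_subtractf)
  moreover have "(\<Sum>j<m. h ((a(i := d)) j)) = h d + (\<Sum>j\<in>?rest. h (a j))"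
    "(\<Sum>j<m. h ((b(i := c)) j)) = h c + (\<Sum>j\<in>?rest. h (b j))"
    using facts(1) by (intro sum_fun_upd_remove; simp)+
  ultimately show ?thesis
    by linarith
qed

lemma gaps_within_cut_right: "gaps_within a (b(i := c)) \<subset> gaps_within a b"
proof
  show "gaps_within a (b(i := c)) \<subseteq> gaps_within a b"
    using largest_gap_facts by (auto simp: gaps_within_def split: if_splits)
  have "(i, c, d) \<notin> gaps_within a (b(i := c))"
    using largest_gap_facts(6) by (simp add: gaps_within_def)
  then show "gaps_within a (b(i := c)) \<noteq> gaps_within a b"
    using gap by blast
qed

lemma gaps_within_cut_left: "gaps_within (a(i := d)) b \<subset> gaps_within a b"
proof
  show "gaps_within (a(i := d)) b \<subseteq> gaps_within a b"
    using largest_gap_facts by (auto simp: gaps_within_def split: if_splits)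
  have "(i, c, d) \<notin> gaps_within (a(i := d)) b"
    using largest_gap_facts(6) by (simp add: gaps_within_def)
  then show "gaps_within (a(i := d)) b \<noteq> gaps_within a b"
    using gap by blast
qed

end

lemma admissible_shrink:
  assumes adm: "admissible a b M y" and "gaps_within a b \<noteq> {}"
  obtains a' b' M' where "admissible a' b' M' y" "gaps_within a' b' \<subset> gaps_within a b"
proof -
  let ?size = "\<lambda>(j :: nat, c, d). h d - h c"
  obtain p where p: "p \<in> gaps_within a b" "Max (?size ` gaps_within a b) = ?size p"
    using obtains_MAX[OF finite_gaps_within assms(2)] by blast
  obtain i c d where p_eq: "p = (i, c, d)"
    by (cases p) auto
  have "?size q \<le> ?size p" if "q \<in> gaps_within a b" for q
    using Max_ge[OF finite_imageI[OF finite_gaps_within] imageI[OF that, of ?size]] p(2) by simp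
  then have largest: "h d' - h c' \<le> h d - h c" if "(j, c', d') \<in> gaps_within a b" for j c' d'
    using that p_eq by fastforce
  have gap: "(i, c, d) \<in> gaps_within a b"
    using p(1) p_eq by simp
  show ?thesis
  proof (cases "y \<le> (\<Sum>j<m. h ((b(i := c)) j))")
    case True
    have "admissible a (b(i := c)) (h d - h c) y"
      by (rule cut_right_admissible[OF adm gap _ True]) (rule largest)
    moreover have "gaps_within a (b(i := c)) \<subset> gaps_within a b"
      by (rule gaps_within_cut_right[OF adm gap]) (rule largest)
    ultimately show ?thesis
      by (rule that)
  next
    case False
    moreover have "(\<Sum>j<m. h ((a(i := d)) j)) \<le> (\<Sum>j<m. h ((b(i := c)) j))"
      by (rule cut_sums_le[OF adm gap]) (rule largest)
    ultimately have "admissible (a(i := d)) b (h d - h c) y"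
      by (intro cut_left_admissible[OF adm gap]) (auto intro: largest)
    moreover have "gaps_within (a(i := d)) b \<subset> gaps_within a b"
      by (rule gaps_within_cut_left[OF adm gap]) (rule largest)
    ultimately show ?thesis
      by (rule that)
  qed
qed

lemma admissible_solution:
  "admissible a b M y \<Longrightarrow> \<exists>x. (\<forall>j<m. avoids_gaps (x j)) \<and> (\<Sum>j<m. h (x j)) = y"
proof (induction "card (gaps_within a b)" arbitrary: a b M rule: less_induct)
  case less
  show ?case
  proof (cases "gaps_within a b = {}")
    case True
    then show ?thesis
      using admissible_no_gaps_within_solution less.prems by blast
  next
    case False
    then obtain a' b' M' where "admissible a' b' M' y" "gaps_within a' b' \<subset> gaps_within a b"
      using admissible_shrink less.prems by metis
    then show ?thesis
      using less.hyps psubset_card_mono[OF finite_gaps_within] by blast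
  qed
qed

theorem sum_of_gap_avoiding_points:
  "y \<in> {0..real m} \<Longrightarrow> \<exists>x. (\<forall>j<m. avoids_gaps (x j)) \<and> (\<Sum>j<m. h (x j)) = y"
  using admissible_solution admissible_initial by blast

end

section \<open>Basic intervals of the middle Cantor set\<close>

lemma cantor_word_affine: "cantor_word r w x = cantor_word r w 0 + r ^ length w * x"
  by (induction w) (auto simp: cantor_map_def algebra_simps)

lemma cantor_word_append: "cantor_word r (u @ v) x = cantor_word r u (cantor_word r v x)"
  by (induction u) auto

lemma mem_cantor_level_iff:
  "z \<in> cantor_level r n \<longleftrightarrow> (\<exists>w t. length w = n \<and> t \<in> {0..1} \<and> z = cantor_word r w t)"
  unfolding cantor_level_def basic_intervals_def by fastforce

locale middle_cantor =
  fixes r :: real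
  assumes ratio_pos: "0 < r" and ratio_less_half: "r < 1/2"
begin

abbreviation "cw \<equiv> cantor_word r"
abbreviation "C \<equiv> cantor_level r"
abbreviation "f \<equiv> cantor_map r"

lemma ratio_less_compl: "r < 1 - r"
  using ratio_less_half by simp

lemma cantor_map_less_iff: "f \<sigma> x < f \<sigma> y \<longleftrightarrow> x < y"
  using ratio_pos by (cases \<sigma>) (auto simp: cantor_map_def)

lemma cantor_map_inj: "f \<sigma> x = f \<sigma> y \<longleftrightarrow> x = y"
  using ratio_pos by (cases \<sigma>) (auto simp: cantor_map_def)

lemma cantor_map_bounds:
  assumes "x \<in> {0..1}"
  shows "f False x \<in> {0..r}" "f True x \<in> {1 - r..1}"
  using assms ratio_pos mult_left_le[of x r] by (auto simp: cantor_map_def)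

lemma cantor_map_eq_iff:
  assumes "x \<in> {0..1}" "y \<in> {0..1}"
  shows "f \<sigma> x = f \<tau> y \<longleftrightarrow> \<sigma> = \<tau> \<and> x = y"
proof
  assume eq: "f \<sigma> x = f \<tau> y"
  have bounds: "f False x \<le> r" "1 - r \<le> f True x" "f False y \<le> r" "1 - r \<le> f True y"
    using cantor_map_bounds[OF assms(1)] cantor_map_bounds[OF assms(2)] by auto
  have "\<sigma> = \<tau>"
  proof (rule ccontr)
    assume "\<sigma> \<noteq> \<tau>"
    then have "f False x = f True y \<or> f True x = f False y"
      using eq by (metis (full_types))
    then show False
      using bounds ratio_less_compl by (elim disjE) linarith+
  qed
  moreover from this have "x = y"
    using eq cantor_map_inj by simp
  ultimately show "\<sigma> = \<tau> \<and> x = y" ..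
qed simp

lemma cantor_map_strict_bounds:
  assumes "0 < x" "x < 1"
  shows "f False x < r" "1 - r < f True x"
  using assms ratio_pos by (auto simp: cantor_map_def)

lemma cantor_map_outside_gap: "x \<in> {0..1} \<Longrightarrow> f \<sigma> x \<le> r \<or> 1 - r \<le> f \<sigma> x"
  using cantor_map_bounds[of x] by (cases \<sigma>) auto

lemma cantor_map_outside_closed_gap: "0 < x \<Longrightarrow> x < 1 \<Longrightarrow> f \<sigma> x < r \<or> 1 - r < f \<sigma> x"
  using cantor_map_strict_bounds[of x] by (cases \<sigma>) auto

lemma cantor_map_cover:
  assumes "x \<in> {0..1}" "\<not> (r < x \<and> x < 1 - r)"
  obtains \<sigma> y where "y \<in> {0..1}" "x = f \<sigma> y"
proof (cases "x \<le> r")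
  case True
  have "x / r \<in> {0..1}" "x = f False (x / r)"
    using True assms(1) ratio_pos by (auto simp: cantor_map_def)
  then show ?thesis using that by blast
next
  case False
  then have "(x - (1 - r)) / r \<in> {0..1}" "x = f True ((x - (1 - r)) / r)"
    using assms ratio_pos by (auto simp: cantor_map_def divide_le_eq_1)
  then show ?thesis using that by blast
qed

lemma cantor_word_less_iff: "cw w s < cw w t \<longleftrightarrow> s < t"
  using ratio_pos by (subst (1 2) cantor_word_affine) simp

lemma cantor_word_le_iff: "cw w s \<le> cw w t \<longleftrightarrow> s \<le> t"
  using ratio_pos by (subst (1 2) cantor_word_affine) simp

lemma cantor_word_eq_iff: "cw w s = cw w t \<longleftrightarrow> s = t"
  using ratio_pos by (subst (1 2) cantor_word_affine) simp

lemma cantor_word_surj: "x = cw w ((x - cw w 0) / r ^ length w)"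
  using ratio_pos by (subst cantor_word_affine) simp

lemma cantor_word_snoc: "cw (w @ [\<sigma>]) t = cw w (f \<sigma> t)"
  by (simp add: cantor_word_append)

lemma cantor_map_unit: "x \<in> {0..1} \<Longrightarrow> f \<sigma> x \<in> {0..1}"
  using cantor_map_bounds[of x] ratio_less_half by (cases \<sigma>) auto

lemma cantor_word_unit: "t \<in> {0..1} \<Longrightarrow> cw w t \<in> {0..1}"
  by (induction w) (simp, metis cantor_map_unit cantor_word.simps(2))

lemma cantor_word_open_unit: "0 < t \<Longrightarrow> t < 1 \<Longrightarrow> 0 < cw w t \<and> cw w t < 1"
  using cantor_word_unit[of 0 w] cantor_word_unit[of 1 w] cantor_word_less_iff[of w 0 t] cantor_word_less_iff[of w t 1] by auto

lemma cantor_word_prefix_bounds: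
  assumes "prefix u v"
  shows "cw u 0 \<le> cw v 0" "cw v 1 \<le> cw u 1"
proof -
  obtain z where v: "v = u @ z"
    using assms by (auto elim: prefixE)
  have "cw z 0 \<in> {0..1}" "cw z 1 \<in> {0..1}"
    using cantor_word_unit by auto
  then show "cw u 0 \<le> cw v 0" "cw v 1 \<le> cw u 1"
    unfolding v cantor_word_append cantor_word_le_iff by auto
qed

text \<open>Two basic intervals that meet belong to comparable words, since the two first-level
  intervals \<open>[0, r]\<close> and \<open>[1 - r, 1]\<close> are disjoint.\<close>
lemma cantor_word_common_point_comparable:
  assumes "cw u s = cw v t" "s \<in> {0..1}" "t \<in> {0..1}"
  shows "prefix u v \<or> prefix v u"
  using assms(1)
proof (induction u arbitrary: v)
  case (Cons \<sigma> u)
  show ?case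
  proof (cases v)
    case v: (Cons \<tau> v')
    have "cw u s \<in> {0..1}" "cw v' t \<in> {0..1}"
      using assms(2,3) cantor_word_unit by auto
    then have "\<sigma> = \<tau>" "cw u s = cw v' t"
      using Cons.prems cantor_map_eq_iff unfolding v by simp_all
    moreover from this(2) have "prefix u v' \<or> prefix v' u"
      by (rule Cons.IH)
    ultimately show ?thesis
      unfolding v by auto
  qed simp
qed simp

lemma cantor_word_interior_gap_point_prefix:
  assumes "cw u 0 < cw v x" "cw v x < cw u 1" "r \<le> x" "x \<le> 1 - r"
  shows "prefix u v"
proof -
  define t where "t = (cw v x - cw u 0) / r ^ length u"
  have t: "cw v x = cw u t"
    unfolding t_def by (rule cantor_word_surj)
  with assms(1,2) have "0 < t" "t < 1"
    using cantor_word_less_iff by simp_all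
  moreover have "x \<in> {0..1}"
    using assms(3,4) ratio_pos by auto
  ultimately have "prefix u v \<or> prefix v u"
    using cantor_word_common_point_comparable[of v x u t] t by auto
  moreover have False if "u = v @ \<sigma> # z" for \<sigma> z
  proof -
    have "0 < cw z t \<and> cw z t < 1"
      using cantor_word_open_unit \<open>0 < t\<close> \<open>t < 1\<close> by blast
    then have "f \<sigma> (cw z t) < r \<or> 1 - r < f \<sigma> (cw z t)"
      using cantor_map_outside_closed_gap by blast
    moreover have "x = f \<sigma> (cw z t)"
      using t that by (simp add: cantor_word_append cantor_word_eq_iff)
    ultimately show False
      using assms(3,4) by auto
  qed
  ultimately show ?thesis
  proof (elim disjE)
    assume "prefix v u"
    then obtain z where "u = v @ z"
      by (auto elim: prefixE)
    with \<open>\<And>\<sigma> z. u = v @ \<sigma> # z \<Longrightarrow> False\<close> show "prefix u v"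
      by (cases z) auto
  qed
qed

lemma gap_right_of_gap:
  assumes "cw w (1 - r) < cw w' r" "cw w' r < cw w 1"
  shows "cw w (1 - r) \<le> cw w' 0"
proof -
  have "cw (w @ [True]) 0 = cw w (1 - r)" "cw (w @ [True]) 1 = cw w 1"
    by (simp_all add: cantor_word_snoc cantor_map_def)
  then have "prefix (w @ [True]) w'"
    using assms ratio_less_compl by (intro cantor_word_interior_gap_point_prefix) auto
  then show ?thesis
    using cantor_word_prefix_bounds(1) \<open>cw (w @ [True]) 0 = cw w (1 - r)\<close> by fastforce
qed

lemma gap_left_of_gap:
  assumes "cw w 0 < cw w' (1 - r)" "cw w' (1 - r) < cw w r"
  shows "cw w' 1 \<le> cw w r"
proof -
  have "cw (w @ [False]) 0 = cw w 0" "cw (w @ [False]) 1 = cw w r"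
    by (simp_all add: cantor_word_snoc cantor_map_def)
  then have "prefix (w @ [False]) w'"
    using assms ratio_less_compl by (intro cantor_word_interior_gap_point_prefix) auto
  then show ?thesis
    using cantor_word_prefix_bounds(2) \<open>cw (w @ [False]) 1 = cw w r\<close> by fastforce
qed

lemma gap_ends_distinct: "cw w' r \<noteq> cw w (1 - r)"
proof
  assume eq: "cw w' r = cw w (1 - r)"
  let ?u = "w' @ [False]" and ?v = "w @ [True]"
  have ends: "cw ?u 1 = cw w' r" "cw ?v 0 = cw w (1 - r)"
    by (simp_all add: cantor_word_snoc cantor_map_def)
  have "prefix ?u ?v \<or> prefix ?v ?u"
    using eq ends by (intro cantor_word_common_point_comparable[of ?u 1 ?v 0]) auto
  moreover have "cw ?u 0 < cw ?u 1" "cw ?v 0 < cw ?v 1"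
    using cantor_word_less_iff by simp_all
  ultimately show False
  proof (elim disjE)
    assume "prefix ?u ?v"
    then show False
      using cantor_word_prefix_bounds(2)[of ?u ?v] eq ends \<open>cw ?v 0 < cw ?v 1\<close> by simp
  next
    assume "prefix ?v ?u"
    then show False
      using cantor_word_prefix_bounds(1)[of ?v ?u] eq ends \<open>cw ?u 0 < cw ?u 1\<close> by simp
  qed
qed

lemma cantor_word_pad_False: "cw (w @ replicate k False) 0 = cw w 0"
proof -
  have "cw (replicate k False) 0 = 0"
    by (induction k) (simp_all add: cantor_map_def)
  then show ?thesis
    by (simp add: cantor_word_append)
qed

lemma cantor_word_pad_True: "cw (w @ replicate k True) 1 = cw w 1"
proof -
  have "cw (replicate k True) 1 = 1"
    by (induction k) (simp_all add: cantor_map_def)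
  then show ?thesis
    by (simp add: cantor_word_append)
qed

lemma interval_ends_in_level:
  assumes "length w \<le> N"
  shows "cw w 0 \<in> C N" "cw w 1 \<in> C N"
proof -
  show "cw w 0 \<in> C N" "cw w 1 \<in> C N"
    unfolding mem_cantor_level_iff
    by (intro exI[of _ "w @ replicate (N - length w) False"] exI[of _ 0]; simp add: assms cantor_word_pad_False)
      (intro exI[of _ "w @ replicate (N - length w) True"] exI[of _ 1]; simp add: assms cantor_word_pad_True)
qed

lemma gap_disjoint_level:
  assumes "length w < N" "cw w r < z" "z < cw w (1 - r)"
  shows "z \<notin> C N"
proof
  assume "z \<in> C N"
  then obtain v t where v: "length v = N" "t \<in> {0..1}" "z = cw v t"
    by (auto simp: mem_cantor_level_iff)
  define x where "x = (z - cw w 0) / r ^ length w"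
  have x: "z = cw w x"
    unfolding x_def by (rule cantor_word_surj)
  with assms(2,3) have "r < x" "x < 1 - r"
    using cantor_word_less_iff by simp_all
  then have "prefix w v \<or> prefix v w"
    using cantor_word_common_point_comparable[of w x v t] v x ratio_pos by simp
  then obtain z where "v = w @ z"
    using assms(1) v(1) prefix_length_le by (auto elim!: prefixE)
  moreover from this have "z \<noteq> []"
    using assms(1) v(1) by auto
  ultimately obtain \<sigma> z' where "v = w @ \<sigma> # z'"
    by (cases z) auto
  then have "x = f \<sigma> (cw z' t)"
    using v(3) x by (simp add: cantor_word_append cantor_word_eq_iff)
  then have "x \<le> r \<or> 1 - r \<le> x"
    using cantor_map_outside_gap[OF cantor_word_unit[OF v(2)]] by simp
  with \<open>r < x\<close> \<open>x < 1 - r\<close> show False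
    by linarith
qed

lemma avoiding_gaps_in_level:
  assumes "x \<in> {0..1}" "\<And>w. length w < N \<Longrightarrow> \<not> (cw w r < x \<and> x < cw w (1 - r))"
  shows "x \<in> C N"
  using assms
proof (induction N arbitrary: x)
  case 0
  then show ?case
    unfolding mem_cantor_level_iff by (intro exI[of _ "[]"] exI[of _ x]) simp
next
  case (Suc N)
  have "\<not> (r < x \<and> x < 1 - r)"
    using Suc.prems(2)[of "[]"] by simp
  then obtain \<sigma> y where y: "y \<in> {0..1}" "x = f \<sigma> y"
    by (rule cantor_map_cover[OF Suc.prems(1)])
  have "y \<in> C N"
  proof (rule Suc.IH[OF y(1)])
    fix w :: "bool list"
    assume "length w < N"
    then have "\<not> (f \<sigma> (cw w r) < f \<sigma> y \<and> f \<sigma> y < f \<sigma> (cw w (1 - r)))"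
      using Suc.prems(2)[of "\<sigma> # w"] y(2) by simp
    then show "\<not> (cw w r < y \<and> y < cw w (1 - r))"
      unfolding cantor_map_less_iff .
  qed
  then obtain v t where v: "length v = N" "t \<in> {0..1}" "y = cw v t"
    by (auto simp: mem_cantor_level_iff)
  show ?case
    unfolding mem_cantor_level_iff
    by (intro exI[of _ "\<sigma> # v"] exI[of _ t]) (use v y(2) in simp)
qed

lemma level_antimono:
  assumes "n \<le> N"
  shows "C N \<subseteq> C n"
proof
  fix z
  assume "z \<in> C N"
  then obtain w t where w: "length w = N" "t \<in> {0..1}" "z = cw w t"
    by (auto simp: mem_cantor_level_iff)
  then have "z = cw (take n w) (cw (drop n w) t)" "cw (drop n w) t \<in> {0..1}"
    using cantor_word_unit by (simp_all flip: cantor_word_append)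
  then show "z \<in> C n"
    unfolding mem_cantor_level_iff
    by (intro exI[of _ "take n w"] exI[of _ "cw (drop n w) t"]) (simp add: w(1) assms)
qed

lemma level_subset_unit: "C n \<subseteq> {0..1}"
  using cantor_word_unit by (auto simp: mem_cantor_level_iff)

lemma cantor_word_image_unit: "cw w ` {0..1} = {cw w 0 .. cw w 1}"
proof
  show "cw w ` {0..1} \<subseteq> {cw w 0 .. cw w 1}"
    using cantor_word_le_iff by auto
  show "{cw w 0 .. cw w 1} \<subseteq> cw w ` {0..1}"
  proof
    fix x
    assume "x \<in> {cw w 0 .. cw w 1}"
    moreover have x: "x = cw w ((x - cw w 0) / r ^ length w)"
      by (rule cantor_word_surj)
    ultimately have "(x - cw w 0) / r ^ length w \<in> {0..1}"
      using cantor_word_le_iff by (metis atLeastAtMost_iff)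
    with x show "x \<in> cw w ` {0..1}"
      by blast
  qed
qed

lemma closed_level: "closed (C n)"
proof -
  have "C n = (\<Union>w\<in>{w. set w \<subseteq> UNIV \<and> length w = n}. {cw w 0 .. cw w 1})"
    unfolding cantor_level_def basic_intervals_def cantor_word_image_unit[symmetric] by auto
  then show ?thesis
    using finite_lists_length_eq[of "UNIV :: bool set" n] by auto
qed

end

section \<open>Thickness of the gaps under powers\<close>

lemma power_increment_mono:
  fixes x y h :: real
  assumes "0 \<le> x" "x \<le> y" "0 \<le> h"
  shows "(x + h) ^ n - x ^ n \<le> (y + h) ^ n - y ^ n"
proof (cases n)
  case (Suc m)
  have "(x + h) ^ Suc m - x ^ Suc m = h * (\<Sum>p<Suc m. (x + h) ^ p * x ^ (m - p))"
    using diff_power_eq_sum[of "x + h" m x] by simp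
  also have "\<dots> \<le> h * (\<Sum>p<Suc m. (y + h) ^ p * y ^ (m - p))"
    using assms by (intro mult_left_mono sum_mono mult_mono power_mono) auto
  also have "\<dots> = (y + h) ^ Suc m - y ^ Suc m"
    using diff_power_eq_sum[of "y + h" m y] by simp
  finally show ?thesis
    using Suc by simp
qed simp

context middle_cantor
begin

text \<open>The image of the Cantor set under \<open>x \<mapsto> x ^ s\<close> has gaps whose neighbouring bridges
  are at least \<open>thickness s\<close> times as large as the gap.\<close>
definition thickness :: "nat \<Rightarrow> real" where
  "thickness s = (r / (1 - r)) ^ s / (1 - (r / (1 - r)) ^ s)"

lemma thickness_nonneg: "0 \<le> thickness s"
proof -
  have "0 < r / (1 - r)" "r / (1 - r) < 1"
    using ratio_pos ratio_less_compl by simp_all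
  then show ?thesis
    unfolding thickness_def by (simp add: power_le_one)
qed

lemma left_bridge_le_right_bridge_power:
  assumes "0 \<le> u" "0 \<le> L"
  shows "(u + r * L) ^ s - u ^ s \<le> (u + L) ^ s - (u + (1 - r) * L) ^ s"
proof -
  have "(u + r * L) ^ s - u ^ s \<le> (u + (1 - r) * L + r * L) ^ s - (u + (1 - r) * L) ^ s"
    using assms ratio_pos ratio_less_compl by (intro power_increment_mono) auto
  also have "u + (1 - r) * L + r * L = u + L"
    by (simp add: algebra_simps)
  finally show ?thesis .
qed

lemma gap_le_left_bridge_power:
  assumes "0 \<le> u" "0 \<le> L" "0 < s"
  shows "thickness s * ((u + (1 - r) * L) ^ s - (u + r * L) ^ s) \<le> (u + r * L) ^ s - u ^ s"
proof -
  define \<rho> where "\<rho> = r / (1 - r)"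
  let ?left = "(u + r * L) ^ s - u ^ s" and ?gap = "(u + (1 - r) * L) ^ s - (u + r * L) ^ s"
  text \<open>The intervals \<open>r [u, u + (1 - r) L]\<close> and \<open>(1 - r) [u, u + r L]\<close> have the same length
    and the second lies further right, so \<open>x ^ s\<close> grows more on it.\<close>
  have "(r * u + r * (1 - r) * L) ^ s - (r * u) ^ s
      \<le> ((1 - r) * u + r * (1 - r) * L) ^ s - ((1 - r) * u) ^ s"
    using assms ratio_pos ratio_less_compl by (intro power_increment_mono mult_right_mono) auto
  moreover have "r * u + r * (1 - r) * L = r * (u + (1 - r) * L)"
    "(1 - r) * u + r * (1 - r) * L = (1 - r) * (u + r * L)"
    by (simp_all add: algebra_simps)
  ultimately have "r ^ s * (u + (1 - r) * L) ^ s - r ^ s * u ^ s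
      \<le> (1 - r) ^ s * (u + r * L) ^ s - (1 - r) ^ s * u ^ s"
    by (simp only: power_mult_distrib)
  then have "r ^ s * (?left + ?gap) \<le> (1 - r) ^ s * ?left"
    by (simp add: algebra_simps)
  then have "\<rho> ^ s * (?left + ?gap) \<le> ?left"
    using ratio_pos ratio_less_compl by (simp add: \<rho>_def power_divide divide_simps mult.commute)
  then have "\<rho> ^ s * ?gap \<le> (1 - \<rho> ^ s) * ?left"
    by (simp add: algebra_simps)
  moreover have "0 < 1 - \<rho> ^ s"
    using ratio_pos ratio_less_compl assms(3) by (simp add: \<rho>_def power_less_one_iff)
  ultimately show ?thesis
    by (simp add: thickness_def \<rho>_def[symmetric] divide_simps mult.commute)
qed

lemma cantor_gap_le_left_bridge_power:
  "0 < s \<Longrightarrow> thickness s * (cw w (1 - r) ^ s - cw w r ^ s) \<le> cw w r ^ s - cw w 0 ^ s"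
  using gap_le_left_bridge_power[of "cw w 0" "r ^ length w" s] cantor_word_unit[of 0 w] ratio_pos
  by (simp add: cantor_word_affine[of r w r] cantor_word_affine[of r w "1 - r"] mult.commute)

lemma cantor_left_bridge_le_right_bridge_power:
  "cw w r ^ s - cw w 0 ^ s \<le> cw w 1 ^ s - cw w (1 - r) ^ s"
  using left_bridge_le_right_bridge_power[of "cw w 0" "r ^ length w" s] cantor_word_unit[of 0 w] ratio_pos
  by (simp add: cantor_word_affine[of r w r] cantor_word_affine[of r w "1 - r"]
      cantor_word_affine[of r w 1] mult.commute)

lemma cantor_gap_thick_right_power:
  assumes "cw w (1 - r) < b" "b \<le> 1" "0 < s"
    and "b = 1 \<or> (\<exists>w'. b = cw w' r \<and>
      cw w (1 - r) ^ s - cw w r ^ s \<le> cw w' (1 - r) ^ s - b ^ s)"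
  shows "thickness s * (cw w (1 - r) ^ s - cw w r ^ s) \<le> b ^ s - cw w (1 - r) ^ s"
proof (cases "cw w 1 \<le> b")
  case True
  have "cw w 1 ^ s \<le> b ^ s"
    using True cantor_word_unit[of 1 w] by (intro power_mono) auto
  then show ?thesis
    using cantor_gap_le_left_bridge_power[OF assms(3), of w] cantor_left_bridge_le_right_bridge_power[of w s] by linarith
next
  case False
  then obtain w' where w': "b = cw w' r"
    "cw w (1 - r) ^ s - cw w r ^ s \<le> cw w' (1 - r) ^ s - b ^ s"
    using assms(4) cantor_word_unit[of 1 w] by auto
  have "cw w (1 - r) \<le> cw w' 0"
    using assms(1) False w'(1) by (intro gap_right_of_gap) auto
  then have "cw w (1 - r) ^ s \<le> cw w' 0 ^ s"
    using cantor_word_unit[of 1 w] cantor_word_unit[of "1 - r" w] ratio_pos ratio_less_compl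
    by (intro power_mono) auto
  moreover have "thickness s * (cw w (1 - r) ^ s - cw w r ^ s)
      \<le> thickness s * (cw w' (1 - r) ^ s - cw w' r ^ s)"
    using w' thickness_nonneg by (intro mult_left_mono) auto
  ultimately show ?thesis
    unfolding w'(1) using cantor_gap_le_left_bridge_power[OF assms(3), of w'] by linarith
qed

lemma cantor_gap_thick_left_power:
  assumes "0 \<le> a" "a < cw w r" "0 < s"
    and "a = 0 \<or> (\<exists>w'. a = cw w' (1 - r) \<and>
      cw w (1 - r) ^ s - cw w r ^ s \<le> a ^ s - cw w' r ^ s)"
  shows "thickness s * (cw w (1 - r) ^ s - cw w r ^ s) \<le> cw w r ^ s - a ^ s"
proof (cases "a \<le> cw w 0")
  case True
  have "a ^ s \<le> cw w 0 ^ s"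
    using True assms(1) by (intro power_mono) auto
  then show ?thesis
    using cantor_gap_le_left_bridge_power[OF assms(3), of w] by linarith
next
  case False
  then obtain w' where w': "a = cw w' (1 - r)"
    "cw w (1 - r) ^ s - cw w r ^ s \<le> a ^ s - cw w' r ^ s"
    using assms(4) cantor_word_unit[of 0 w] by auto
  have "cw w' 1 \<le> cw w r"
    using assms(2) False w'(1) by (intro gap_left_of_gap) auto
  then have "cw w' 1 ^ s \<le> cw w r ^ s"
    using cantor_word_unit[of 1 w'] by (intro power_mono) auto
  moreover have "thickness s * (cw w (1 - r) ^ s - cw w r ^ s)
      \<le> thickness s * (cw w' (1 - r) ^ s - cw w' r ^ s)"
    using w' thickness_nonneg by (intro mult_left_mono) auto
  ultimately show ?thesis
    unfolding w'(1)
    using cantor_gap_le_left_bridge_power[OF assms(3), of w'] cantor_left_bridge_le_right_bridge_power[of w' s]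
    by linarith
qed

end

section \<open>Sums of powers of points of the Cantor set\<close>

context middle_cantor
begin

definition gap_family :: "nat \<Rightarrow> (real \<times> real) set" where
  "gap_family N = (\<lambda>w. (cw w r, cw w (1 - r))) ` {w. length w < N}"

lemma finite_gap_family: "finite (gap_family N)"
proof -
  have "{w :: bool list. length w < N} \<subseteq> {w. set w \<subseteq> UNIV \<and> length w \<le> N}"
    by auto
  then show ?thesis
    unfolding gap_family_def
    using finite_lists_length_le[of "UNIV :: bool set" N] finite_subset by auto
qed

lemma level_sum_of_powers:
  assumes s: "0 < s" and m: "1 \<le> real (m - 1) * min 1 (thickness s)" and y: "y \<in> {0..real m}"
  shows "\<exists>x. (\<forall>j<m. x j \<in> C N) \<and> (\<Sum>j<m. x j ^ s) = y"
proof -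
  interpret thick_gap_system "\<lambda>x. x ^ s" "gap_family N" m "thickness s"
  proof
    fix c d
    assume "(c, d) \<in> gap_family N"
    then obtain w where "c = cw w r" "d = cw w (1 - r)"
      by (auto simp: gap_family_def)
    moreover have "cw w 0 < cw w r" "cw w r < cw w (1 - r)" "cw w (1 - r) < cw w 1"
      using ratio_pos ratio_less_compl cantor_word_less_iff by simp_all
    ultimately show "0 < c \<and> c < d \<and> d < 1"
      using cantor_word_unit[of 0 w] cantor_word_unit[of 1 w] by auto
  next
    fix c d c' d'
    assume "(c, d) \<in> gap_family N" "(c', d') \<in> gap_family N"
    then show "c' \<noteq> d"
      using gap_ends_distinct by (auto simp: gap_family_def)
  next
    fix c d c' d'
    assume "(c, d) \<in> gap_family N" "(c', d') \<in> gap_family N"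
    then obtain w w' where w: "length w < N" "c = cw w r" "d = cw w (1 - r)"
      and w': "length w' < N" "c' = cw w' r" "d' = cw w' (1 - r)"
      by (auto simp: gap_family_def)
    have "c' \<in> C N" "d' \<in> C N"
      using interval_ends_in_level(2)[of "w' @ [False]" N] interval_ends_in_level(1)[of "w' @ [True]" N] w'
      by (simp_all add: cantor_word_snoc cantor_map_def)
    then show "\<not> (c < c' \<and> c' < d) \<and> \<not> (c < d' \<and> d' < d)"
      using gap_disjoint_level[OF w(1)] w by blast
  next
    fix c d b
    assume "(c, d) \<in> gap_family N" "d < b" "b \<le> 1"
      and "b = 1 \<or> (\<exists>d'. (b, d') \<in> gap_family N \<and> d ^ s - c ^ s \<le> d' ^ s - b ^ s)"
    moreover from this(1) obtain w where "c = cw w r" "d = cw w (1 - r)"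
      by (auto simp: gap_family_def)
    ultimately show "thickness s * (d ^ s - c ^ s) \<le> b ^ s - d ^ s"
      using cantor_gap_thick_right_power[of w b s] s by (auto simp: gap_family_def)
  next
    fix c d a
    assume "(c, d) \<in> gap_family N" "0 \<le> a" "a < c"
      and "a = 0 \<or> (\<exists>c'. (c', a) \<in> gap_family N \<and> d ^ s - c ^ s \<le> a ^ s - c' ^ s)"
    moreover from this(1) obtain w where "c = cw w r" "d = cw w (1 - r)"
      by (auto simp: gap_family_def)
    ultimately show "thickness s * (d ^ s - c ^ s) \<le> c ^ s - a ^ s"
      using cantor_gap_thick_left_power[of a w s] s by (auto simp: gap_family_def)
  next
    show "1 \<le> real (m - 1) * min 1 (thickness s)"
      by (rule m)
  qed (use finite_gap_family s in \<open>auto intro: continuous_intros power_mono\<close>)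
  obtain x where x: "\<forall>j<m. avoids_gaps (x j)" "(\<Sum>j<m. x j ^ s) = y"
    using sum_of_gap_avoiding_points[OF y] by blast
  have "x j \<in> C N" if "j < m" for j
  proof -
    have "x j \<in> {0..1}" "\<forall>(c, d) \<in> gap_family N. \<not> (c < x j \<and> x j < d)"
      using x(1) that unfolding avoids_gaps_def by auto
    then show ?thesis
      by (intro avoiding_gaps_in_level) (auto simp: gap_family_def)
  qed
  then show ?thesis
    using x(2) by blast
qed

end

lemma bounded_family_convergent_subseq:
  fixes X :: "nat \<Rightarrow> nat \<Rightarrow> real"
  assumes "\<And>n j. j < p \<Longrightarrow> X n j \<in> {0..1}"
  shows "\<exists>\<sigma> l. strict_mono \<sigma> \<and> (\<forall>j<p. (\<lambda>n. X (\<sigma> n) j) \<longlonglongrightarrow> l j)"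
  using assms
proof (induction p)
  case 0
  show ?case
    by (intro exI[of _ id]) (auto simp: strict_mono_def)
next
  case (Suc p)
  then obtain \<sigma> l where \<sigma>: "strict_mono \<sigma>" "\<forall>j<p. (\<lambda>n. X (\<sigma> n) j) \<longlonglongrightarrow> l j"
    by force
  have "\<forall>n. X (\<sigma> n) p \<in> {0..1}"
    using Suc.prems by simp
  then obtain l' \<sigma>' where \<sigma>': "strict_mono \<sigma>'" "((\<lambda>n. X (\<sigma> n) p) \<circ> \<sigma>') \<longlonglongrightarrow> l'"
    using seq_compactE[OF compact_imp_seq_compact[OF compact_Icc]] by metis
  show ?case
  proof (intro exI conjI allI impI)
    show "strict_mono (\<sigma> \<circ> \<sigma>')"
      using \<sigma>(1) \<sigma>'(1) by (rule strict_mono_o)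
    fix j
    assume "j < Suc p"
    show "(\<lambda>n. X ((\<sigma> \<circ> \<sigma>') n) j) \<longlonglongrightarrow> (l(p := l')) j"
    proof (cases "j = p")
      case True
      then show ?thesis
        using \<sigma>'(2) by (simp add: comp_def)
    next
      case False
      then have "(\<lambda>n. X (\<sigma> n) j) \<longlonglongrightarrow> l j"
        using \<sigma>(2) \<open>j < Suc p\<close> by simp
      from LIMSEQ_subseq_LIMSEQ[OF this \<sigma>'(1)] show ?thesis
        using False by (simp add: comp_def)
    qed
  qed
qed

context middle_cantor
begin

lemma sum_of_powers_in_all_levels:
  fixes m s :: nat
  assumes "\<And>N. \<exists>x. (\<forall>j<m. x j \<in> C N) \<and> (\<Sum>j<m. x j ^ s) = y"
  shows "\<exists>x. (\<forall>j<m. \<forall>n. x j \<in> C n) \<and> (\<Sum>j<m. x j ^ s) = y"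
proof -
  obtain X where X: "\<And>N. (\<forall>j<m. X N j \<in> C N) \<and> (\<Sum>j<m. X N j ^ s) = y"
    using assms by metis
  then obtain \<sigma> l where \<sigma>: "strict_mono \<sigma>" "\<forall>j<m. (\<lambda>n. X (\<sigma> n) j) \<longlonglongrightarrow> l j"
    using bounded_family_convergent_subseq[of m X] level_subset_unit by blast
  have "l j \<in> C n" if "j < m" for j n
  proof (rule Lim_in_closed_set[OF closed_level _ _ \<sigma>(2)[rule_format, OF that]])
    have "X (\<sigma> N) j \<in> C n" if "n \<le> N" for N
      using X[of "\<sigma> N"] level_antimono[OF order_trans[OF that seq_suble[OF \<sigma>(1)]]] \<open>j < m\<close>
      by blast
    then show "eventually (\<lambda>N. X (\<sigma> N) j \<in> C n) sequentially"
      by (auto simp: eventually_sequentially)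
  qed simp
  moreover have "(\<lambda>N. \<Sum>j<m. X (\<sigma> N) j ^ s) \<longlonglongrightarrow> (\<Sum>j<m. l j ^ s)"
    using \<sigma>(2) by (intro tendsto_sum tendsto_power) auto
  then have "(\<lambda>N. y) \<longlonglongrightarrow> (\<Sum>j<m. l j ^ s)"
    using X by simp
  then have "(\<Sum>j<m. l j ^ s) = y"
    using LIMSEQ_unique tendsto_const by blast
  ultimately show ?thesis
    by blast
qed

lemma many_summands_of_power:
  assumes "0 < s" "((1 - r) / r) ^ s \<le> real m"
  shows "1 \<le> real (m - 1) * min 1 (thickness s)"
proof -
  define \<rho> where "\<rho> = r / (1 - r)"
  have \<rho>: "0 < \<rho> ^ s" "\<rho> ^ s < 1"
    using ratio_pos ratio_less_compl assms(1) by (simp_all add: \<rho>_def power_less_one_iff)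
  have "1 \<le> real m * \<rho> ^ s"
    using mult_right_mono[OF assms(2), of "\<rho> ^ s"] \<rho> ratio_pos ratio_less_compl
    by (simp add: \<rho>_def power_divide)
  have "2 \<le> m"
  proof (rule ccontr)
    assume "\<not> 2 \<le> m"
    then have "real m * \<rho> ^ s \<le> 1 * \<rho> ^ s"
      using \<rho> by (intro mult_right_mono) auto
    then show False
      using \<open>1 \<le> real m * \<rho> ^ s\<close> \<rho> by linarith
  qed
  have "1 - \<rho> ^ s \<le> (real m - 1) * \<rho> ^ s"
    using \<open>1 \<le> real m * \<rho> ^ s\<close> by (simp add: algebra_simps)
  then have "1 \<le> (real m - 1) * thickness s"
    using \<rho> by (simp add: thickness_def \<rho>_def[symmetric] field_simps)
  moreover have "1 \<le> real m - 1"
    using \<open>2 \<le> m\<close> by simp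
  ultimately show ?thesis
    using \<open>2 \<le> m\<close> by (simp add: min_def of_nat_diff)
qed

theorem sum_of_powers_in_cantor_levels:
  assumes "0 < s" "((1 - r) / r) ^ s \<le> real m" "y \<in> {0..real m}"
  shows "\<exists>x. (\<forall>j<m. \<forall>n. x j \<in> C n) \<and> (\<Sum>j<m. x j ^ s) = y"
  using level_sum_of_powers[OF assms(1) many_summands_of_power[OF assms(1,2)] assms(3)]
  by (rule sum_of_powers_in_all_levels)

end

lemma middle_cantor_ratio: "1 < \<alpha> \<Longrightarrow> middle_cantor (cantor_ratio \<alpha>)"
  by unfold_locales (auto simp: cantor_ratio_def field_simps)

lemma cantor_set_subset_unit: "1 < \<alpha> \<Longrightarrow> cantor_set \<alpha> \<subseteq> {0..1}"
  using middle_cantor.level_subset_unit[OF middle_cantor_ratio, of \<alpha> 1]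
  by (auto simp: cantor_set_def)

lemma sum_pair_products_bounds:
  fixes x :: "nat \<Rightarrow> real"
  assumes "\<And>i. i < 2 * n \<Longrightarrow> x i \<in> {0..1}"
  shows "(\<Sum>i<n. x (2 * i) ^ a * x (2 * i + 1) ^ b) \<in> {0..real n}"
proof -
  have "x (2 * i) ^ a * x (2 * i + 1) ^ b \<in> {0..1}" if "i < n" for i
    using assms[of "2 * i"] assms[of "2 * i + 1"] that by (simp add: mult_le_one power_le_one)
  then show ?thesis
    using sum_bounded_above[of "{..<n}" "\<lambda>i. x (2 * i) ^ a * x (2 * i + 1) ^ b" 1]
    by (auto intro: sum_nonneg)
qed

text \<open>Taking equal points in each pair turns \<open>x ^ a * y ^ b\<close> into \<open>x ^ (a + b)\<close>.\<close>
lemma sum_pair_products_onto: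
  assumes "1 < \<alpha>" "0 < a + b" "((1 - cantor_ratio \<alpha>) / cantor_ratio \<alpha>) ^ (a + b) \<le> real n"
    and "y \<in> {0..real n}"
  shows "\<exists>x. (\<forall>i<2 * n. x i \<in> cantor_set \<alpha>) \<and> (\<Sum>i<n. x (2 * i) ^ a * x (2 * i + 1) ^ b) = y"
proof -
  obtain z where z: "\<forall>j<n. \<forall>N. z j \<in> cantor_level (cantor_ratio \<alpha>) N" "(\<Sum>j<n. z j ^ (a + b)) = y"
    using middle_cantor.sum_of_powers_in_cantor_levels[OF middle_cantor_ratio[OF assms(1)] assms(2-4)]
    by blast
  have "\<forall>i<2 * n. z (i div 2) \<in> cantor_set \<alpha>"
    using z(1) by (auto simp: cantor_set_def)
  moreover have "(\<Sum>i<n. z (2 * i div 2) ^ a * z ((2 * i + 1) div 2) ^ b) = y"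
    using z(2) by (simp add: power_add)
  ultimately show ?thesis
    by (intro exI[of _ "\<lambda>i. z (i div 2)"]) simp
qed

theorem mainTheorem3:
  fixes \<alpha> :: real and a b k :: nat
  assumes "\<alpha> > 1" and "a > 0" and "b > 0" and "a + b \<ge> 2"
    and "k > 0" and "even k"
    and "real k \<ge> Max {
      of_int \<lceil>2 * ((1 - cantor_ratio \<alpha> + cantor_ratio \<alpha> ^ nat (\<lfloor>- log (cantor_ratio \<alpha>) (real (a + b) - 1)\<rfloor> + 1)) ^ (a + b - 2)
                  * ((1 - cantor_ratio \<alpha> + cantor_ratio \<alpha> ^ nat (\<lfloor>- log (cantor_ratio \<alpha>) (real (a + b) - 1)\<rfloor> + 1)) + (real (a + b) - 1)))
               / ((1 - cantor_ratio \<alpha>) ^ (a + b - 2)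
                  * ((1 - cantor_ratio \<alpha>) + (real (a + b) - 1) * (1 - cantor_ratio \<alpha> ^ nat (\<lfloor>- log (cantor_ratio \<alpha>) (real (a + b) - 1)\<rfloor> + 1))))
               + 2\<rceil> * ((1 - cantor_ratio \<alpha>) / cantor_ratio \<alpha>) ^ (a + b - 1),
      2 * ((1 - cantor_ratio \<alpha>) / cantor_ratio \<alpha>) ^ (a + b),
      2 * (1 / (1 - cantor_ratio \<alpha>)) ^ (a + b - 1) + 2}"
  shows "{0 .. real k / 2} =
    {(\<Sum>i < k div 2. x (2 * i) ^ a * x (2 * i + 1) ^ b) | x :: nat \<Rightarrow> real.
       \<forall>i < k. x i \<in> cantor_set \<alpha>}"
proof -
  have k: "real k / 2 = real (k div 2)" "2 * (k div 2) = k"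
    using assms(6) by auto
  have "2 * ((1 - cantor_ratio \<alpha>) / cantor_ratio \<alpha>) ^ (a + b) \<le> real k"
    by (rule order_trans[OF Max_ge assms(7)]) (simp only: finite_insert finite.emptyI, intro insertI2 insertI1)
  then have "((1 - cantor_ratio \<alpha>) / cantor_ratio \<alpha>) ^ (a + b) \<le> real (k div 2)"
    using k by linarith
  have "y \<in> {(\<Sum>i < k div 2. x (2 * i) ^ a * x (2 * i + 1) ^ b) | x. \<forall>i < k. x i \<in> cantor_set \<alpha>}"
    if y: "y \<in> {0..real (k div 2)}" for y
  proof -
    obtain x where "\<forall>i<k. x i \<in> cantor_set \<alpha>" "(\<Sum>i < k div 2. x (2 * i) ^ a * x (2 * i + 1) ^ b) = y"
      using sum_pair_products_onto[OF assms(1) _ \<open>_ \<le> real (k div 2)\<close> y] assms(2) k(2) by auto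
    then show ?thesis
      by (intro CollectI exI[of _ x]) simp
  qed
  moreover have "(\<Sum>i < k div 2. x (2 * i) ^ a * x (2 * i + 1) ^ b) \<in> {0..real (k div 2)}"
    if "\<forall>i < k. x i \<in> cantor_set \<alpha>" for x
    using that cantor_set_subset_unit[OF assms(1)] k(2) by (intro sum_pair_products_bounds) auto
  ultimately show ?thesis
    unfolding k(1) by blast
qed

end
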